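(* Let $v$ be a vertex of a graph $\Gamma$ with incident edges $e_1,\dots,e_K$, and for each $i$ let $X_i$ be a nonsingular vector field defined on a neighborhood of the endpoint of $e_i$ at $v$, this neighborhood being identified with $[0,1)$ with $0$ corresponding to $v$. Suppose that (1) each $X_i$ generates a well-defined local semiflow on $(0,1)$; (2) the magnitudes $\|X_i(0)\|$ of the endpoint vectors (taken with respect to the attaching homeomorphisms) are all identical; and (3) among the signs of the endpoint vectors $X_i(0)$ (positive if pointing into $[0,\epsilon)$, negative if pointing out of it) there is exactly one positive sign. Then $\{X_i\}$ generates a well-defined semiflow on the union of these edge neighborhoods in $\Gamma$, i.e., every point has a unique forward orbit.
   Context: A graph consists of finitely many vertices and edges, each edge homeomorphic to $[0,1]$ and attached to vertices along its endpoints, with the quotient topology. A semiflow is a continuous-time dynamical system in which every point has a uniquely defined forward orbit (backward orbits need not be unique). *)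

theory Defs
  imports Complex_Main
begin

text \<open>Local model of the union of the edge neighbourhoods at a vertex v with K incident
  edge-ends e_0, ..., e_(K-1).  The neighbourhood of the end of e_i is identified with [0,1),
  0 corresponding to v.  A point is a pair (i, x) with i < K and 0 < x < 1 (a point on the
  i-th edge-end), or the vertex itself, represented canonically by (0, 0).\<close>

definition star_vertex :: "nat \<times> real" where
  "star_vertex = (0, 0)"

definition star_space :: "nat \<Rightarrow> (nat \<times> real) set" where
  "star_space K = {(i, x). i < K \<and> 0 < x \<and> x < 1} \<union> {star_vertex}"

text \<open>The path metric of the star (quotient topology of the glued intervals).\<close>
fun stardist :: "nat \<times> real \<Rightarrow> nat \<times> real \<Rightarrow> real" where
  "stardist (i, x) (j, y) = (if i = j then \<bar>x - y\<bar> else x + y)"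

definition edge_solution :: "(real \<Rightarrow> real) \<Rightarrow> (real \<Rightarrow> real) \<Rightarrow> real \<Rightarrow> bool" where
  "edge_solution f y T \<longleftrightarrow> 0 < T \<and>
     (\<forall>t\<in>{0..<T}. y t \<in> {0<..<1} \<and>
        (y has_real_derivative f (y t)) (at t within {0..<T}))"

definition generates_local_semiflow :: "(real \<Rightarrow> real) \<Rightarrow> bool" where
  "generates_local_semiflow f \<longleftrightarrow>
     (\<forall>x\<in>{0<..<1}.
        (\<exists>T y. edge_solution f y T \<and> y 0 = x) \<and>
        (\<forall>y1 T1 y2 T2. edge_solution f y1 T1 \<and> edge_solution f y2 T2 \<and> y1 0 = x \<and> y2 0 = x
            \<longrightarrow> (\<forall>t\<in>{0..<min T1 T2}. y1 t = y2 t)))"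

definition star_solution ::
  "nat \<Rightarrow> (nat \<Rightarrow> real \<Rightarrow> real) \<Rightarrow> (real \<Rightarrow> nat \<times> real) \<Rightarrow> real \<Rightarrow> bool" where
  "star_solution K X \<gamma> T \<longleftrightarrow> 0 < T \<and>
     (\<forall>t\<in>{0..<T}. \<gamma> t \<in> star_space K) \<and>
     (\<forall>t\<in>{0..<T}. \<forall>\<epsilon>>0. \<exists>\<delta>>0. \<forall>s\<in>{0..<T}. \<bar>s - t\<bar> < \<delta> \<longrightarrow> stardist (\<gamma> s) (\<gamma> t) < \<epsilon>) \<and>
     (\<forall>t\<in>{0..<T}. \<gamma> t \<noteq> star_vertex \<longrightarrow>
        ((\<lambda>s. snd (\<gamma> s)) has_real_derivative X (fst (\<gamma> t)) (snd (\<gamma> t))) (at t within {0..<T})) \<and>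
     (\<forall>t\<in>{0..<T}. \<gamma> t = star_vertex \<longrightarrow>
        (\<exists>j<K. (\<forall>\<^sub>F s in at_right t. fst (\<gamma> s) = j) \<and>
               ((\<lambda>s. snd (\<gamma> s)) has_real_derivative X j 0) (at t within {t..<T})))"

definition generates_semiflow :: "nat \<Rightarrow> (nat \<Rightarrow> real \<Rightarrow> real) \<Rightarrow> bool" where
  "generates_semiflow K X \<longleftrightarrow>
     (\<forall>p\<in>star_space K.
        (\<exists>\<gamma> T. star_solution K X \<gamma> T \<and> \<gamma> 0 = p) \<and>
        (\<forall>\<gamma>1 T1 \<gamma>2 T2. star_solution K X \<gamma>1 T1 \<and> star_solution K X \<gamma>2 T2 \<and> \<gamma>1 0 = p \<and> \<gamma>2 0 = p
            \<longrightarrow> (\<forall>t\<in>{0..<min T1 T2}. \<gamma>1 t = \<gamma>2 t)))"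

end

theory Submission
  imports Defs "HOL-Analysis.Analysis"
begin

(* On the i-th edge-end let tau_i(x) (edge_time) be the time the flow of X_i needs to travel from
   the vertex to x, the integral of 1/X_i from 0 to x. It is strictly monotone with the sign of
   X_i(0). The resulting time function H (star_time) on the star vanishes exactly at the vertex,
   is positive exactly on the unique outgoing edge and negative on the incoming ones, and along
   every solution it grows at unit speed, even through the vertex: a solution cannot rest there,
   since its exit velocity is nonzero, so it visits the vertex at most once. Hence H(gamma t) =
   H(gamma 0) + t. As H is injective on each edge-end, and a solution with negative time has not
   yet left its initial edge, gamma t is determined by gamma 0 and t. Existence comes from the
   local semiflows on the edges and, at the vertex, from inverting tau on the outgoing edge. *)

lemma connected_nonzero_sign_eq:
  fixes f :: "'a::topological_space \<Rightarrow> real"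
  assumes "connected S" "continuous_on S f" "\<And>x. x \<in> S \<Longrightarrow> f x \<noteq> 0" "a \<in> S" "b \<in> S"
  shows "0 < f a \<longleftrightarrow> 0 < f b"
proof -
  have "0 < f x" if "x \<in> S" "y \<in> S" "0 < f y" for x y
  proof (rule ccontr)
    assume "\<not> 0 < f x"
    with assms(3) that(1) have "f x < 0" by fastforce
    moreover have "connected (f ` S)" using assms(2,1) by (rule connected_continuous_image)
    ultimately have "0 \<in> f ` S" using connectedD_interval[of "f ` S" "f x" "f y" 0] that by auto
    then show False using assms(3) by force
  qed
  then show ?thesis using assms(4,5) by blast
qed

lemma one_le_abs_of_nat_diff: "real m \<noteq> real n \<Longrightarrow> 1 \<le> \<bar>real m - real n\<bar>"
  by (cases m n rule: linorder_cases) auto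

lemma right_derivative_nonzero_imp_eventually_greater:
  fixes f :: "real \<Rightarrow> real"
  assumes der: "(f has_real_derivative D) (at t within {t..<T})" and "D \<noteq> 0" "t < T"
    and ge: "\<And>s. t \<le> s \<Longrightarrow> s < T \<Longrightarrow> f t \<le> f s"
  shows "\<forall>\<^sub>F s in at_right t. f t < f s"
proof -
  have "\<not> D < 0"
  proof
    assume "D < 0"
    then obtain d where d: "d > 0" "\<forall>h>0. t + h \<in> {t..<T} \<longrightarrow> h < d \<longrightarrow> f (t + h) < f t"
      using has_real_derivative_neg_dec_right[OF der] by blast
    define h where "h = min d (T - t) / 2"
    have "0 < h" "h < d" "t + h < T" using d \<open>t < T\<close> by (auto simp: h_def min_def field_simps)
    then show False using d(2) ge[of "t + h"] by force
  qed
  with \<open>D \<noteq> 0\<close> obtain d where d: "d > 0" "\<forall>h>0. t + h \<in> {t..<T} \<longrightarrow> h < d \<longrightarrow> f t < f (t + h)"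
    using has_real_derivative_pos_inc_right[OF der] by (meson linorder_neqE_linordered_idom)
  show ?thesis
    unfolding eventually_at_right_field
  proof (intro exI[of _ "min (t + d) T"] conjI allI impI)
    fix s assume "t < s" "s < min (t + d) T"
    then show "f t < f s" using d(2)[rule_format, of "s - t"] by auto
  qed (use d \<open>t < T\<close> in auto)
qed

lemma increment_eq_if_DERIV_one:
  fixes h :: "real \<Rightarrow> real"
  assumes "a \<le> b" "continuous_on {a..b} h" "finite Z"
    and deriv: "\<And>s. a < s \<Longrightarrow> s < b \<Longrightarrow> s \<notin> Z \<Longrightarrow> (h has_real_derivative 1) (at s)"
  shows "h b = h a + (b - a)"
proof -
  have "h b - b = h a - a"
  proof (rule has_derivative_zero_unique_strong_interval[of "Z \<union> {a, b}" a b "\<lambda>s. h s - s"])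
    show "continuous_on {a..b} (\<lambda>s. h s - s)" using assms(2) by (intro continuous_intros)
    fix s assume "s \<in> {a..b} - (Z \<union> {a, b})"
    then have "((\<lambda>s. h s - s) has_real_derivative 1 - 1) (at s)"
      using deriv by (intro derivative_intros) auto
    then show "((\<lambda>s. h s - s) has_derivative (\<lambda>_. 0)) (at s within {a..b})"
      by (simp add: has_field_derivative_def lambda_zero has_derivative_at_withinI)
  qed (use assms in auto)
  then show ?thesis by simp
qed

lemma inverse_of_strict_mono_continuous:
  fixes f :: "real \<Rightarrow> real"
  assumes "a < b" and cont: "\<And>x. a \<le> x \<Longrightarrow> x \<le> b \<Longrightarrow> isCont f x"
    and mono: "\<And>x y. a \<le> x \<Longrightarrow> x < y \<Longrightarrow> y \<le> b \<Longrightarrow> f x < f y"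
  shows "\<exists>g. (\<forall>x\<in>{a..b}. g (f x) = x) \<and> (\<forall>t\<in>{f a<..<f b}. a < g t \<and> g t < b \<and> f (g t) = t)"
proof -
  define g where "g = inv_into {a..b} f"
  have g_f: "g (f x) = x" if "a \<le> x" "x \<le> b" for x
    unfolding g_def
  proof (rule inv_into_f_f[OF inj_onI])
    fix x y assume "x \<in> {a..b}" "y \<in> {a..b}" "f x = f y"
    then show "x = y" using mono[of x y] mono[of y x] by (cases x y rule: linorder_cases) auto
  qed (use that in auto)
  have f_g: "a < g t \<and> g t < b \<and> f (g t) = t" if "f a < t" "t < f b" for t
  proof -
    have "continuous_on {a..b} f" by (intro continuous_at_imp_continuous_on ballI cont) auto
    then have "\<exists>x\<ge>a. x \<le> b \<and> f x = t" using that \<open>a < b\<close> by (intro IVT') auto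
    then obtain x where x: "a \<le> x" "x \<le> b" "f x = t" by blast
    with that have "x \<noteq> a" "x \<noteq> b" by auto
    with x show ?thesis using g_f[of x] by simp
  qed
  show ?thesis by (intro exI[of _ g] conjI ballI) (simp_all add: g_f f_g)
qed

lemma inverse_of_positive_derivative:
  fixes f f' :: "real \<Rightarrow> real"
  assumes "a < b"
    and deriv: "\<And>x. a \<le> x \<Longrightarrow> x \<le> b \<Longrightarrow> (f has_real_derivative f' x) (at x)"
    and pos: "\<And>x. a \<le> x \<Longrightarrow> x \<le> b \<Longrightarrow> 0 < f' x"
  shows "\<exists>g. (\<forall>x\<in>{a..b}. g (f x) = x) \<and> (\<forall>t\<in>{f a<..<f b}. a < g t \<and> g t < b \<and> f (g t) = t \<and>
    (g has_real_derivative inverse (f' (g t))) (at t))"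
proof -
  have cont: "isCont f x" if "a \<le> x" "x \<le> b" for x
    using deriv[OF that] by (rule DERIV_isCont)
  have mono: "f x < f y" if "a \<le> x" "x < y" "y \<le> b" for x y
  proof (rule DERIV_pos_imp_increasing[OF \<open>x < y\<close>])
    fix z assume "x \<le> z" "z \<le> y"
    with that show "\<exists>D. (f has_real_derivative D) (at z) \<and> 0 < D"
      by (intro exI[of _ "f' z"] conjI deriv pos) auto
  qed
  obtain g where g_f: "\<forall>x\<in>{a..b}. g (f x) = x"
    and f_g: "\<forall>t\<in>{f a<..<f b}. a < g t \<and> g t < b \<and> f (g t) = t"
    using inverse_of_strict_mono_continuous[OF \<open>a < b\<close> cont mono] by blast
  have g_deriv: "(g has_real_derivative inverse (f' (g t))) (at t)" if t: "f a < t" "t < f b" for t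
  proof -
    have gt: "a < g t" "g t < b" "f (g t) = t" using f_g t by auto
    have "isCont g (f (g t))"
    proof (rule isCont_inverse_function2[of a "g t" b])
      fix z assume "a \<le> z" "z \<le> b"
      then show "g (f z) = z" "isCont f z" using g_f cont by auto
    qed (use gt in auto)
    then have "isCont g t" using gt by simp
    show ?thesis
    proof (rule DERIV_inverse_function[OF _ _ t])
      show "(f has_real_derivative f' (g t)) (at (g t))" using gt by (intro deriv) auto
      show "f' (g t) \<noteq> 0" using gt pos[of "g t"] by simp
      show "\<And>u. f a < u \<Longrightarrow> u < f b \<Longrightarrow> f (g u) = u" using f_g by auto
    qed fact
  qed
  show ?thesis using g_f f_g g_deriv by (intro exI[of _ g] conjI ballI) auto
qed

context
  fixes h :: "real \<Rightarrow> real" and T :: real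
  assumes continuous: "continuous_on {0..<T} h"
    and deriv_one: "\<And>s. 0 < s \<Longrightarrow> s < T \<Longrightarrow> h s \<noteq> 0 \<Longrightarrow> (h has_real_derivative 1) (at s)"
    and zeros_right_isolated: "\<And>s. 0 \<le> s \<Longrightarrow> s < T \<Longrightarrow> h s = 0 \<Longrightarrow> \<forall>\<^sub>F u in at_right s. h u \<noteq> 0"
begin

lemma no_two_right_isolated_zeros:
  assumes "0 \<le> t1" "t1 < t2" "t2 < T" "h t1 = 0" "h t2 = 0"
  shows False
proof -
  obtain b where b: "t1 < b" "\<And>s. t1 < s \<Longrightarrow> s < b \<Longrightarrow> h s \<noteq> 0"
    using zeros_right_isolated[of t1] assms unfolding eventually_at_right_field by auto
  define c where "c = min ((t1 + b) / 2) ((t1 + t2) / 2)"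
  have c: "t1 < c" "c < t2" "h c \<noteq> 0" using b assms by (auto simp: c_def min_def)
  define S where "S = {s \<in> {c..t2}. h s = 0}"
  have "closed S"
    unfolding S_def using continuous assms c
    by (intro continuous_closed_preimage_constant continuous_on_subset[OF continuous]) auto
  moreover have "t2 \<in> S" "bdd_below S" using assms c by (auto simp: S_def)
  ultimately have "Inf S \<in> S" using closed_contains_Inf by blast
  define m where "m = Inf S"
  have m: "c \<le> m" "m \<le> t2" "h m = 0" using \<open>Inf S \<in> S\<close> by (auto simp: S_def m_def)
  have "h m = h t1 + (m - t1)"
  proof (rule increment_eq_if_DERIV_one[where Z = "{}"])
    show "continuous_on {t1..m} h" using assms m by (intro continuous_on_subset[OF continuous]) auto
    fix s assume s: "t1 < s" "s < m"
    have "h s \<noteq> 0"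
    proof (cases "s < b")
      case False
      then have "c \<le> s" using b(1) by (simp add: c_def min_def)
      show ?thesis
      proof
        assume "h s = 0"
        then have "s \<in> S" using \<open>c \<le> s\<close> s m by (simp add: S_def)
        then have "m \<le> s" unfolding m_def using \<open>bdd_below S\<close> by (rule cInf_lower)
        then show False using s by simp
      qed
    qed (use b s in auto)
    then show "(h has_real_derivative 1) (at s)" using deriv_one s assms m by auto
  qed (use m c in auto)
  then show False using m c assms by simp
qed

lemma eq_add_if_DERIV_one_off_right_isolated_zeros:
  assumes "0 \<le> t" "t < T"
  shows "h t = h 0 + t"
proof -
  let ?Z = "{s \<in> {0..t}. h s = 0}"
  have unique: "s = z" if "z \<in> ?Z" "s \<in> ?Z" for s z
    using no_two_right_isolated_zeros[of s z] no_two_right_isolated_zeros[of z s] that assms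
    by (cases s z rule: linorder_cases) auto
  have "finite ?Z"
  proof (cases "?Z = {}")
    case False
    then obtain z where "z \<in> ?Z" by blast
    then have "?Z \<subseteq> {z}" using unique by blast
    then show ?thesis by (rule finite_subset) simp
  next
    case True
    then show ?thesis by (simp only: finite.emptyI)
  qed
  have "h t = h 0 + (t - 0)"
  proof (rule increment_eq_if_DERIV_one[OF _ _ \<open>finite ?Z\<close>])
    show "continuous_on {0..t} h"
      by (rule continuous_on_subset[OF continuous]) (use assms in auto)
  qed (use assms deriv_one in auto)
  then show ?thesis by simp
qed

end

text \<open>The integrand is extended constantly to the left of the vertex, so that the time is
  differentiable on an open interval around it.\<close>
definition edge_time :: "(real \<Rightarrow> real) \<Rightarrow> real \<Rightarrow> real" where
  "edge_time f x =
     integral {-1..x} (\<lambda>s. 1 / f (max s 0)) - integral {-1..0} (\<lambda>s. 1 / f (max s 0))"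

lemma edge_time_zero [simp]: "edge_time f 0 = 0"
  by (simp add: edge_time_def)

locale nonsingular_edge_field =
  fixes f :: "real \<Rightarrow> real"
  assumes continuous: "continuous_on {0..<1} f"
    and nonzero: "\<And>x. 0 \<le> x \<Longrightarrow> x < 1 \<Longrightarrow> f x \<noteq> 0"
begin

lemma sign_eq: "0 \<le> x \<Longrightarrow> x < 1 \<Longrightarrow> 0 < f x \<longleftrightarrow> 0 < f 0"
  by (rule connected_nonzero_sign_eq[OF _ continuous]) (auto simp: nonzero)

lemma continuous_on_reciprocal: "b < 1 \<Longrightarrow> continuous_on {-1..b} (\<lambda>s. 1 / f (max s 0))"
  by (intro continuous_intros continuous_on_compose2[OF continuous]) (auto simp: nonzero)

lemma has_real_derivative_edge_time:
  assumes "-1 < x" "x < 1"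
  shows "(edge_time f has_real_derivative 1 / f (max x 0)) (at x)"
proof -
  define b where "b = (x + 1) / 2"
  have "x < b" "b < 1" using assms by (auto simp: b_def)
  have "((\<lambda>y. integral {-1..y} (\<lambda>s. 1 / f (max s 0))) has_real_derivative 1 / f (max x 0))
      (at x within {-1..b})"
    using assms \<open>x < b\<close> by (intro integral_has_real_derivative continuous_on_reciprocal \<open>b < 1\<close>) auto
  moreover have "at x within {-1..b} = at x"
    using assms \<open>x < b\<close> by (intro at_within_interior) auto
  ultimately show ?thesis
    unfolding edge_time_def[abs_def] by (auto intro!: derivative_eq_intros)
qed

lemma isCont_edge_time: "-1 < x \<Longrightarrow> x < 1 \<Longrightarrow> isCont (edge_time f) x"
  by (rule DERIV_isCont[OF has_real_derivative_edge_time])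

lemma edge_time_strict_mono:
  assumes "0 < f 0" "-1 < x" "x < y" "y < 1"
  shows "edge_time f x < edge_time f y"
proof (rule DERIV_pos_imp_increasing[OF \<open>x < y\<close>])
  fix z assume "x \<le> z" "z \<le> y"
  then have "0 < f (max z 0)" using sign_eq[of "max z 0"] assms by auto
  then show "\<exists>D. (edge_time f has_real_derivative D) (at z) \<and> 0 < D"
    using has_real_derivative_edge_time[of z] assms \<open>x \<le> z\<close> \<open>z \<le> y\<close> by auto
qed

lemma edge_time_strict_antimono:
  assumes "f 0 < 0" "-1 < x" "x < y" "y < 1"
  shows "edge_time f y < edge_time f x"
proof (rule DERIV_neg_imp_decreasing[OF \<open>x < y\<close>])
  fix z assume "x \<le> z" "z \<le> y"
  then have "0 \<le> max z 0" "max z 0 < 1" using assms by auto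
  then have "f (max z 0) < 0"
    using sign_eq[of "max z 0"] nonzero[of "max z 0"] assms by linarith
  then show "\<exists>D. (edge_time f has_real_derivative D) (at z) \<and> D < 0"
    using has_real_derivative_edge_time[of z] assms \<open>x \<le> z\<close> \<open>z \<le> y\<close> by auto
qed

lemma edge_time_inj:
  assumes "-1 < x" "x < 1" "-1 < y" "y < 1" "edge_time f x = edge_time f y"
  shows "x = y"
proof -
  have "f 0 < 0 \<or> 0 < f 0" using nonzero[of 0] by linarith
  then show ?thesis
    using edge_time_strict_mono[of x y] edge_time_strict_mono[of y x]
      edge_time_strict_antimono[of x y] edge_time_strict_antimono[of y x] assms
    by (cases x y rule: linorder_cases) auto
qed

lemma edge_time_pos_iff: "0 < x \<Longrightarrow> x < 1 \<Longrightarrow> 0 < edge_time f x \<longleftrightarrow> 0 < f 0"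
  using edge_time_strict_mono[of 0 x] edge_time_strict_antimono[of 0 x] nonzero[of 0]
  by (cases "0 < f 0") auto

lemma edge_time_nonzero: "0 < x \<Longrightarrow> x < 1 \<Longrightarrow> edge_time f x \<noteq> 0"
  using edge_time_strict_mono[of 0 x] edge_time_strict_antimono[of 0 x] nonzero[of 0]
  by (cases "0 < f 0") auto

lemma solution_from_zero:
  assumes "0 < f 0"
  obtains y T where "0 < T" "y 0 = 0" "\<And>t. 0 \<le> t \<Longrightarrow> t < T \<Longrightarrow> 0 \<le> y t \<and> y t < 1"
    "\<And>t. 0 < t \<Longrightarrow> t < T \<Longrightarrow> 0 < y t"
    "\<And>t. 0 \<le> t \<Longrightarrow> t < T \<Longrightarrow> (y has_real_derivative f (y t)) (at t)"
proof -
  let ?\<tau> = "edge_time f" and ?a = "-1/2 :: real" and ?b = "1/2 :: real"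
  have mono: "?\<tau> x < ?\<tau> x'" if "-1 < x" "x < x'" "x' < 1" for x x'
    using edge_time_strict_mono[OF assms that] .
  have "?a < ?b" by simp
  moreover have "(?\<tau> has_real_derivative 1 / f (max x 0)) (at x)" if "?a \<le> x" "x \<le> ?b" for x
    using that by (intro has_real_derivative_edge_time) auto
  moreover have "0 < 1 / f (max x 0)" if "?a \<le> x" "x \<le> ?b" for x
    using sign_eq[of "max x 0"] assms that by auto
  ultimately have "\<exists>y. (\<forall>x\<in>{?a..?b}. y (?\<tau> x) = x) \<and>
      (\<forall>t\<in>{?\<tau> ?a<..<?\<tau> ?b}. ?a < y t \<and> y t < ?b \<and> ?\<tau> (y t) = t \<and>
        (y has_real_derivative inverse (1 / f (max (y t) 0))) (at t))"
    by (rule inverse_of_positive_derivative)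
  then obtain y where y_\<tau>: "\<forall>x\<in>{?a..?b}. y (?\<tau> x) = x"
    and \<tau>_y: "\<forall>t\<in>{?\<tau> ?a<..<?\<tau> ?b}. ?a < y t \<and> y t < ?b \<and> ?\<tau> (y t) = t \<and>
      (y has_real_derivative inverse (1 / f (max (y t) 0))) (at t)"
    by blast
  define T where "T = ?\<tau> ?b"
  have "?\<tau> ?a < 0" "0 < T" using mono[of ?a 0] mono[of 0 ?b] by (auto simp: T_def)
  have y_pos: "0 \<le> y t \<and> y t < 1 \<and> (0 < t \<longrightarrow> 0 < y t)" if "0 \<le> t" "t < T" for t
  proof -
    have t: "?a < y t" "y t < ?b" "?\<tau> (y t) = t"
      using \<tau>_y that \<open>?\<tau> ?a < 0\<close> by (auto simp: T_def)
    have "\<not> y t < 0" using mono[of "y t" 0] t that by auto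
    moreover have "0 < t \<longrightarrow> y t \<noteq> 0" using t by auto
    ultimately show ?thesis using t by auto
  qed
  have deriv: "(y has_real_derivative f (y t)) (at t)" if "0 \<le> t" "t < T" for t
  proof -
    have "t \<in> {?\<tau> ?a<..<?\<tau> ?b}" using that \<open>?\<tau> ?a < 0\<close> by (simp add: T_def)
    with \<tau>_y have "(y has_real_derivative inverse (1 / f (max (y t) 0))) (at t)" by blast
    then show ?thesis using y_pos[OF that] by simp
  qed
  have "y 0 = 0" using y_\<tau>[rule_format, of 0] by simp
  show ?thesis by (rule that[of T y, OF \<open>0 < T\<close> \<open>y 0 = 0\<close>]) (use y_pos deriv in auto)
qed

end

lemma star_space_snd: "a \<in> star_space K \<Longrightarrow> 0 \<le> snd a \<and> snd a < 1"
  by (auto simp: star_space_def star_vertex_def)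

lemma star_space_nonvertex: "a \<in> star_space K \<Longrightarrow> a \<noteq> star_vertex \<Longrightarrow> fst a < K \<and> 0 < snd a"
  by (auto simp: star_space_def)

lemma stardist_ge_snd_diff: "0 \<le> snd a \<Longrightarrow> 0 \<le> snd b \<Longrightarrow> \<bar>snd a - snd b\<bar> \<le> stardist a b"
  by (cases a; cases b) auto

lemma stardist_fst_neq: "fst a \<noteq> fst b \<Longrightarrow> stardist a b = snd a + snd b"
  by (cases a; cases b) auto

definition star_time :: "(nat \<Rightarrow> real \<Rightarrow> real) \<Rightarrow> nat \<times> real \<Rightarrow> real" where
  "star_time X a = edge_time (X (fst a)) (snd a)"

lemma star_time_vertex [simp]: "star_time X star_vertex = 0"
  by (simp add: star_time_def star_vertex_def)

locale star_field =
  fixes K :: nat and X :: "nat \<Rightarrow> real \<Rightarrow> real" and p :: nat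
  assumes edge_fields: "\<And>i. i < K \<Longrightarrow> nonsingular_edge_field (X i)"
    and p_less: "p < K" and X_p_pos: "0 < X p 0"
    and X_other_neg: "\<And>i. i < K \<Longrightarrow> i \<noteq> p \<Longrightarrow> X i 0 < 0"
begin

lemma star_time_pos_iff:
  assumes "a \<in> star_space K" "a \<noteq> star_vertex"
  shows "0 < star_time X a \<longleftrightarrow> fst a = p"
proof -
  have a: "fst a < K" "0 < snd a" "snd a < 1" using assms star_space_nonvertex star_space_snd by auto
  then have "0 < star_time X a \<longleftrightarrow> 0 < X (fst a) 0"
    unfolding star_time_def by (intro nonsingular_edge_field.edge_time_pos_iff edge_fields)
  also have "\<dots> \<longleftrightarrow> fst a = p" using X_p_pos X_other_neg[of "fst a"] a by (cases "fst a = p") auto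
  finally show ?thesis .
qed

lemma star_time_nonzero:
  assumes "a \<in> star_space K" "a \<noteq> star_vertex"
  shows "star_time X a \<noteq> 0"
proof -
  have "fst a < K" "0 < snd a" "snd a < 1" using assms star_space_nonvertex star_space_snd by auto
  then show ?thesis
    unfolding star_time_def by (intro nonsingular_edge_field.edge_time_nonzero edge_fields)
qed

lemma star_time_inj:
  assumes a: "a \<in> star_space K" and b: "b \<in> star_space K" and eq: "star_time X a = star_time X b"
    and edge: "star_time X a < 0 \<Longrightarrow> fst a = fst b"
  shows "a = b"
proof (cases "a = star_vertex \<or> b = star_vertex")
  case True
  then show ?thesis using star_time_nonzero[OF a] star_time_nonzero[OF b] eq by (metis star_time_vertex)
next
  case False
  have "fst a = fst b"
    using edge star_time_pos_iff[OF a] star_time_pos_iff[OF b] star_time_nonzero[OF a] False eq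
    by (cases "star_time X a < 0") auto
  moreover have "snd a = snd b"
  proof (rule nonsingular_edge_field.edge_time_inj)
    show "nonsingular_edge_field (X (fst a))" using star_space_nonvertex[OF a] False by (simp add: edge_fields)
    show "edge_time (X (fst a)) (snd a) = edge_time (X (fst a)) (snd b)"
      using eq \<open>fst a = fst b\<close> by (simp add: star_time_def)
  qed (use star_space_nonvertex[OF a] star_space_nonvertex[OF b] star_space_snd[OF a] star_space_snd[OF b] False in auto)
  ultimately show ?thesis by (simp add: prod_eq_iff)
qed

lemma star_time_tendsto_zero:
  assumes "((\<lambda>s. snd (u s)) \<longlongrightarrow> 0) F" "\<forall>\<^sub>F s in F. u s \<in> star_space K"
  shows "((\<lambda>s. star_time X (u s)) \<longlongrightarrow> 0) F"
proof (rule Lim_null_comparison)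
  define M where "M y = (\<Sum>i<K. \<bar>edge_time (X i) y\<bar>)" for y
  have "isCont M 0"
    unfolding M_def[abs_def]
    by (intro continuous_intros nonsingular_edge_field.isCont_edge_time[OF edge_fields]) auto
  from isCont_tendsto_compose[OF this assms(1)]
  show "((\<lambda>s. M (snd (u s))) \<longlongrightarrow> 0) F" by (simp add: M_def)
  have bound: "norm (star_time X a) \<le> M (snd a)" if "a \<in> star_space K" for a
  proof (cases "a = star_vertex")
    case False
    then have "fst a \<in> {..<K}" using star_space_nonvertex[OF that] by simp
    then show ?thesis
      unfolding M_def star_time_def real_norm_def by (rule member_le_sum) auto
  qed (simp add: M_def star_time_def star_vertex_def)
  show "\<forall>\<^sub>F s in F. norm (star_time X (u s)) \<le> M (snd (u s))"
    using assms(2) by (rule eventually_mono) (rule bound)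
qed

end

locale star_trajectory = star_field +
  fixes \<gamma> :: "real \<Rightarrow> nat \<times> real" and T :: real
  assumes solution: "star_solution K X \<gamma> T"
begin

lemma in_star_space: "t \<in> {0..<T} \<Longrightarrow> \<gamma> t \<in> star_space K"
  using solution by (simp add: star_solution_def)

lemma snd_bounds: "t \<in> {0..<T} \<Longrightarrow> 0 \<le> snd (\<gamma> t) \<and> snd (\<gamma> t) < 1"
  using star_space_snd in_star_space by blast

lemma off_vertex_coords:
  "t \<in> {0..<T} \<Longrightarrow> \<gamma> t \<noteq> star_vertex \<Longrightarrow> fst (\<gamma> t) < K \<and> 0 < snd (\<gamma> t)"
  using star_space_nonvertex in_star_space by blast

lemma eventually_in_domain: "\<forall>\<^sub>F s in at t within {0..<T}. s \<in> {0..<T}"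
  by (simp add: eventually_at_filter)

lemma eventually_stardist_less:
  assumes "t \<in> {0..<T}" "0 < e"
  shows "\<forall>\<^sub>F s in at t within {0..<T}. stardist (\<gamma> s) (\<gamma> t) < e"
proof -
  obtain d where "d > 0" "\<forall>s\<in>{0..<T}. \<bar>s - t\<bar> < d \<longrightarrow> stardist (\<gamma> s) (\<gamma> t) < e"
    using solution assms unfolding star_solution_def by blast
  then show ?thesis unfolding eventually_at dist_real_def by blast
qed

lemma snd_tendsto:
  assumes "t \<in> {0..<T}"
  shows "((\<lambda>s. snd (\<gamma> s)) \<longlongrightarrow> snd (\<gamma> t)) (at t within {0..<T})"
  unfolding tendsto_iff dist_real_def
proof (intro allI impI)
  fix e :: real assume "0 < e"
  with assms have "\<forall>\<^sub>F s in at t within {0..<T}. stardist (\<gamma> s) (\<gamma> t) < e"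
    by (rule eventually_stardist_less)
  with eventually_in_domain show "\<forall>\<^sub>F s in at t within {0..<T}. \<bar>snd (\<gamma> s) - snd (\<gamma> t)\<bar> < e"
  proof eventually_elim
    case (elim s)
    have "\<bar>snd (\<gamma> s) - snd (\<gamma> t)\<bar> \<le> stardist (\<gamma> s) (\<gamma> t)"
      using snd_bounds[of s] snd_bounds[of t] elim assms by (intro stardist_ge_snd_diff) auto
    with elim show ?case by linarith
  qed
qed

lemma eventually_same_edge:
  assumes t: "t \<in> {0..<T}" and "\<gamma> t \<noteq> star_vertex"
  shows "\<forall>\<^sub>F s in at t within {0..<T}. fst (\<gamma> s) = fst (\<gamma> t)"
proof -
  have "0 < snd (\<gamma> t)" using off_vertex_coords assms by blast
  with t have "\<forall>\<^sub>F s in at t within {0..<T}. stardist (\<gamma> s) (\<gamma> t) < snd (\<gamma> t)"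
    by (rule eventually_stardist_less)
  with eventually_in_domain show ?thesis
  proof eventually_elim
    case (elim s)
    show ?case
    proof (rule ccontr)
      assume "fst (\<gamma> s) \<noteq> fst (\<gamma> t)"
      then have "stardist (\<gamma> s) (\<gamma> t) = snd (\<gamma> s) + snd (\<gamma> t)" by (rule stardist_fst_neq)
      with elim snd_bounds[of s] show False by linarith
    qed
  qed
qed

lemma continuous_on_star_time: "continuous_on {0..<T} (\<lambda>s. star_time X (\<gamma> s))"
  unfolding continuous_on_def
proof
  fix t assume t: "t \<in> {0..<T}"
  show "((\<lambda>s. star_time X (\<gamma> s)) \<longlongrightarrow> star_time X (\<gamma> t)) (at t within {0..<T})"
  proof (cases "\<gamma> t = star_vertex")
    case True
    then have "((\<lambda>s. snd (\<gamma> s)) \<longlongrightarrow> 0) (at t within {0..<T})"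
      using snd_tendsto[OF t] by (simp add: star_vertex_def)
    moreover have "\<forall>\<^sub>F s in at t within {0..<T}. \<gamma> s \<in> star_space K"
      using eventually_in_domain by (rule eventually_mono) (rule in_star_space)
    ultimately show ?thesis using True by (simp add: star_time_tendsto_zero)
  next
    case False
    let ?i = "fst (\<gamma> t)"
    have "?i < K" "0 < snd (\<gamma> t)" "snd (\<gamma> t) < 1"
      using off_vertex_coords[OF t False] snd_bounds[OF t] by auto
    then have "isCont (edge_time (X ?i)) (snd (\<gamma> t))"
      by (intro nonsingular_edge_field.isCont_edge_time edge_fields) auto
    from isCont_tendsto_compose[OF this snd_tendsto[OF t]]
    have "((\<lambda>s. edge_time (X ?i) (snd (\<gamma> s))) \<longlongrightarrow> star_time X (\<gamma> t)) (at t within {0..<T})"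
      by (simp add: star_time_def)
    moreover have "\<forall>\<^sub>F s in at t within {0..<T}. edge_time (X ?i) (snd (\<gamma> s)) = star_time X (\<gamma> s)"
      using eventually_same_edge[OF t False] by (rule eventually_mono) (simp add: star_time_def)
    ultimately show ?thesis by (rule Lim_transform_eventually)
  qed
qed

lemma has_real_derivative_star_time:
  assumes "0 < t" "t < T" "\<gamma> t \<noteq> star_vertex"
  shows "((\<lambda>s. star_time X (\<gamma> s)) has_real_derivative 1) (at t)"
proof -
  let ?i = "fst (\<gamma> t)" and ?x = "snd (\<gamma> t)"
  have t: "t \<in> {0..<T}" using assms by simp
  have x: "?i < K" "0 < ?x" "?x < 1"
    using off_vertex_coords[OF t assms(3)] snd_bounds[OF t] by auto
  interpret edge: nonsingular_edge_field "X ?i" using x(1) by (rule edge_fields)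
  have "((\<lambda>s. snd (\<gamma> s)) has_real_derivative X ?i ?x) (at t within {0..<T})"
    using solution t assms(3) unfolding star_solution_def by blast
  with edge.has_real_derivative_edge_time[of ?x]
  have "((\<lambda>s. edge_time (X ?i) (snd (\<gamma> s))) has_real_derivative 1 / X ?i (max ?x 0) * X ?i ?x)
      (at t within {0..<T})"
    using x by (intro DERIV_chain2) auto
  moreover have "1 / X ?i (max ?x 0) * X ?i ?x = 1" using x edge.nonzero[of ?x] by simp
  moreover have "\<forall>\<^sub>F s in at t within {0..<T}. edge_time (X ?i) (snd (\<gamma> s)) = star_time X (\<gamma> s)"
    using eventually_same_edge[OF t assms(3)] by (rule eventually_mono) (simp add: star_time_def)
  ultimately have "((\<lambda>s. star_time X (\<gamma> s)) has_real_derivative 1) (at t within {0..<T})"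
    using has_field_derivative_cong_eventually[of _ _ t] by (simp add: star_time_def)
  moreover have "at t within {0..<T} = at t" using assms by (intro at_within_interior) auto
  ultimately show ?thesis by simp
qed

text \<open>The exit velocity is nonzero, and it cannot be negative because the edge coordinate is
  nonnegative.\<close>
lemma leaves_vertex:
  assumes t: "t \<in> {0..<T}" and "\<gamma> t = star_vertex"
  shows "\<forall>\<^sub>F s in at_right t. \<gamma> s \<noteq> star_vertex"
proof -
  obtain j where "j < K" and der: "((\<lambda>s. snd (\<gamma> s)) has_real_derivative X j 0) (at t within {t..<T})"
    using solution assms unfolding star_solution_def by blast
  have "X j 0 \<noteq> 0" using nonsingular_edge_field.nonzero[OF edge_fields[OF \<open>j < K\<close>]] by simp
  moreover have snd_0: "snd (\<gamma> t) = 0" using assms by (simp add: star_vertex_def)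
  ultimately have "\<forall>\<^sub>F s in at_right t. snd (\<gamma> t) < snd (\<gamma> s)"
  proof (intro right_derivative_nonzero_imp_eventually_greater[OF der])
    show "t < T" using t by simp
    fix s assume "t \<le> s" "s < T"
    then show "snd (\<gamma> t) \<le> snd (\<gamma> s)" using snd_0 snd_bounds[of s] t by auto
  qed
  then show ?thesis
  proof (rule eventually_mono)
    fix s assume "snd (\<gamma> t) < snd (\<gamma> s)"
    then have "snd (\<gamma> s) \<noteq> 0" using snd_0 by simp
    then show "\<gamma> s \<noteq> star_vertex" by (auto simp: star_vertex_def)
  qed
qed

lemma star_time_along:
  assumes "t \<in> {0..<T}"
  shows "star_time X (\<gamma> t) = star_time X (\<gamma> 0) + t"
proof -
  have vertex_iff: "star_time X (\<gamma> s) = 0 \<longleftrightarrow> \<gamma> s = star_vertex" if "s \<in> {0..<T}" for s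
    using star_time_nonzero[OF in_star_space[OF that]] by auto
  show ?thesis
  proof (rule eq_add_if_DERIV_one_off_right_isolated_zeros[OF continuous_on_star_time])
    fix s assume s: "0 \<le> s" "s < T" "star_time X (\<gamma> s) = 0"
    have "\<forall>\<^sub>F u in at_right s. u < T"
      using order_tendstoD(2)[OF tendsto_ident_at \<open>s < T\<close>] .
    moreover have "\<forall>\<^sub>F u in at_right s. \<gamma> u \<noteq> star_vertex"
      using s vertex_iff[of s] by (intro leaves_vertex) auto
    ultimately show "\<forall>\<^sub>F u in at_right s. star_time X (\<gamma> u) \<noteq> 0"
      using eventually_at_right_less[of s]
    proof eventually_elim
      case (elim u)
      then show ?case using s vertex_iff[of u] by simp
    qed
  next
    fix s assume "0 < s" "s < T" "star_time X (\<gamma> s) \<noteq> 0"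
    then show "((\<lambda>s. star_time X (\<gamma> s)) has_real_derivative 1) (at s)"
      by (intro has_real_derivative_star_time) auto
  qed (use assms in auto)
qed

lemma same_edge_before_vertex:
  assumes t: "t \<in> {0..<T}" and "star_time X (\<gamma> 0) + t < 0"
  shows "fst (\<gamma> t) = fst (\<gamma> 0)"
proof -
  have sub: "{0..t} \<subseteq> {0..<T}" using t by auto
  have off_vertex: "\<gamma> s \<noteq> star_vertex" if "s \<in> {0..t}" for s
  proof
    assume "\<gamma> s = star_vertex"
    then have "star_time X (\<gamma> 0) + s = 0" using star_time_along[of s] that sub by auto
    then show False using that assms(2) by auto
  qed
  have "(\<lambda>s. real (fst (\<gamma> s))) constant_on {0..t}"
  proof (rule continuous_discrete_range_constant)
    show "continuous_on {0..t} (\<lambda>s. real (fst (\<gamma> s)))"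
      unfolding continuous_on_def
    proof
      fix s assume s: "s \<in> {0..t}"
      with sub have "s \<in> {0..<T}" by blast
      from eventually_same_edge[OF this off_vertex[OF s]]
      have "\<forall>\<^sub>F u in at s within {0..<T}. real (fst (\<gamma> u)) = real (fst (\<gamma> s))"
        by (rule eventually_mono) simp
      then have "((\<lambda>s. real (fst (\<gamma> s))) \<longlongrightarrow> real (fst (\<gamma> s))) (at s within {0..<T})"
        by (rule tendsto_eventually)
      then show "((\<lambda>s. real (fst (\<gamma> s))) \<longlongrightarrow> real (fst (\<gamma> s))) (at s within {0..t})"
        by (rule tendsto_within_subset) (rule sub)
    qed
    show "\<exists>e>0. \<forall>y. y \<in> {0..t} \<and> real (fst (\<gamma> y)) \<noteq> real (fst (\<gamma> x)) \<longrightarrow>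
        e \<le> norm (real (fst (\<gamma> y)) - real (fst (\<gamma> x)))" for x
      by (intro exI[of _ 1]) (simp add: one_le_abs_of_nat_diff)
  qed simp
  then obtain c where "\<forall>s\<in>{0..t}. real (fst (\<gamma> s)) = c" unfolding constant_on_def by blast
  then have "real (fst (\<gamma> t)) = real (fst (\<gamma> 0))" using t by simp
  then show ?thesis by simp
qed

end

lemma star_solution_along_edge:
  assumes "i < K" "0 < T"
    and range: "\<And>t. 0 \<le> t \<Longrightarrow> t < T \<Longrightarrow> 0 \<le> y t \<and> y t < 1"
    and pos: "\<And>t. 0 < t \<Longrightarrow> t < T \<Longrightarrow> 0 < y t"
    and deriv: "\<And>t. 0 \<le> t \<Longrightarrow> t < T \<Longrightarrow> (y has_real_derivative X i (y t)) (at t within {0..<T})"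
  shows "\<exists>\<gamma>. star_solution K X \<gamma> T \<and> \<gamma> 0 = (if y 0 = 0 then star_vertex else (i, y 0))"
proof -
  define \<gamma> where "\<gamma> t = (if y t = 0 then star_vertex else (i, y t))" for t
  have snd_\<gamma>: "(\<lambda>s. snd (\<gamma> s)) = y" by (auto simp: \<gamma>_def star_vertex_def)
  have "star_solution K X \<gamma> T"
    unfolding star_solution_def snd_\<gamma>
  proof (intro conjI ballI allI impI)
    fix t assume t: "t \<in> {0..<T}"
    show "\<gamma> t \<in> star_space K" using range[of t] t \<open>i < K\<close> by (auto simp: \<gamma>_def star_space_def)
    show "(y has_real_derivative X (fst (\<gamma> t)) (snd (\<gamma> t))) (at t within {0..<T})"
      if "\<gamma> t \<noteq> star_vertex"
      using deriv[of t] t that by (auto simp: \<gamma>_def split: if_splits)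
    show "\<exists>j<K. (\<forall>\<^sub>F s in at_right t. fst (\<gamma> s) = j) \<and>
        (y has_real_derivative X j 0) (at t within {t..<T})" if "\<gamma> t = star_vertex"
    proof (intro exI[of _ i] conjI \<open>i < K\<close>)
      have "y t = 0" using that by (auto simp: \<gamma>_def star_vertex_def split: if_splits)
      then have "t = 0" using pos[of t] t by force
      show "\<forall>\<^sub>F s in at_right t. fst (\<gamma> s) = i"
        unfolding eventually_at_right_field
      proof (intro exI[of _ T] conjI allI impI)
        fix s assume "t < s" "s < T"
        then have "0 < y s" using pos \<open>t = 0\<close> by simp
        then show "fst (\<gamma> s) = i" by (simp add: \<gamma>_def)
      qed (use \<open>0 < T\<close> \<open>t = 0\<close> in simp)
      show "(y has_real_derivative X i 0) (at t within {t..<T})"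
        using deriv[of t] t \<open>t = 0\<close> \<open>y t = 0\<close> by simp
    qed
    fix e :: real assume "0 < e"
    have "continuous (at t within {0..<T}) y" using deriv[of t] t by (auto intro: DERIV_continuous)
    then obtain d where "d > 0" "\<forall>s\<in>{0..<T}. dist s t < d \<longrightarrow> dist (y s) (y t) < e"
      using \<open>0 < e\<close> unfolding continuous_within_eps_delta by blast
    moreover have "stardist (\<gamma> s) (\<gamma> t) = \<bar>y s - y t\<bar>" if "s \<in> {0..<T}" for s
      using range[of s] range[of t] that t by (auto simp: \<gamma>_def star_vertex_def)
    ultimately show "\<exists>d>0. \<forall>s\<in>{0..<T}. \<bar>s - t\<bar> < d \<longrightarrow> stardist (\<gamma> s) (\<gamma> t) < e"
      by (auto simp: dist_real_def)
  qed (use \<open>0 < T\<close> in simp)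
  then show ?thesis by (auto simp: \<gamma>_def)
qed

lemma star_solution_from_edge_point:
  assumes "i < K" "0 < x" "x < 1" and "generates_local_semiflow (X i)"
  shows "\<exists>\<gamma> T. star_solution K X \<gamma> T \<and> \<gamma> 0 = (i, x)"
proof -
  have "x \<in> {0<..<1}" using assms by simp
  then obtain y T where "edge_solution (X i) y T" "y 0 = x"
    using assms(4) unfolding generates_local_semiflow_def by blast
  then have "0 < T" and y: "\<And>t. t \<in> {0..<T} \<Longrightarrow>
      0 < y t \<and> y t < 1 \<and> (y has_real_derivative X i (y t)) (at t within {0..<T})"
    unfolding edge_solution_def by auto
  have "\<exists>\<gamma>. star_solution K X \<gamma> T \<and> \<gamma> 0 = (if y 0 = 0 then star_vertex else (i, y 0))"
  proof (rule star_solution_along_edge[OF \<open>i < K\<close> \<open>0 < T\<close>])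
    fix t assume "0 \<le> t" "t < T"
    then show "0 \<le> y t \<and> y t < 1" "(y has_real_derivative X i (y t)) (at t within {0..<T})"
      using y[of t] by auto
  next
    fix t assume "0 < t" "t < T"
    then show "0 < y t" using y[of t] by auto
  qed
  then show ?thesis using \<open>y 0 = x\<close> \<open>0 < x\<close> by auto
qed

context star_field
begin

lemma star_solution_unique:
  assumes "star_solution K X \<gamma>1 T1" "star_solution K X \<gamma>2 T2" "\<gamma>1 0 = \<gamma>2 0"
    and t: "t \<in> {0..<min T1 T2}"
  shows "\<gamma>1 t = \<gamma>2 t"
proof -
  interpret \<gamma>1: star_trajectory K X p \<gamma>1 T1
    using assms(1) by (intro star_trajectory.intro star_field_axioms star_trajectory_axioms.intro)
  interpret \<gamma>2: star_trajectory K X p \<gamma>2 T2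
    using assms(2) by (intro star_trajectory.intro star_field_axioms star_trajectory_axioms.intro)
  have t1: "t \<in> {0..<T1}" and t2: "t \<in> {0..<T2}" using t by auto
  show ?thesis
  proof (rule star_time_inj[OF \<gamma>1.in_star_space[OF t1] \<gamma>2.in_star_space[OF t2]])
    show "star_time X (\<gamma>1 t) = star_time X (\<gamma>2 t)"
      using \<gamma>1.star_time_along[OF t1] \<gamma>2.star_time_along[OF t2] assms(3) by simp
    show "fst (\<gamma>1 t) = fst (\<gamma>2 t)" if "star_time X (\<gamma>1 t) < 0"
      using \<gamma>1.same_edge_before_vertex[OF t1] \<gamma>2.same_edge_before_vertex[OF t2]
        \<gamma>1.star_time_along[OF t1] assms(3) that by simp
  qed
qed

lemma star_solution_from_vertex: "\<exists>\<gamma> T. star_solution K X \<gamma> T \<and> \<gamma> 0 = star_vertex"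
proof -
  obtain y T where "0 < T" "y 0 = 0" and range: "\<And>t. 0 \<le> t \<Longrightarrow> t < T \<Longrightarrow> 0 \<le> y t \<and> y t < 1"
    and pos: "\<And>t. 0 < t \<Longrightarrow> t < T \<Longrightarrow> 0 < y t"
    and deriv: "\<And>t. 0 \<le> t \<Longrightarrow> t < T \<Longrightarrow> (y has_real_derivative X p (y t)) (at t)"
    by (rule nonsingular_edge_field.solution_from_zero[OF edge_fields[OF p_less] X_p_pos]) blast
  have "\<exists>\<gamma>. star_solution K X \<gamma> T \<and> \<gamma> 0 = (if y 0 = 0 then star_vertex else (p, y 0))"
    using range pos deriv[THEN has_field_derivative_at_within]
    by (rule star_solution_along_edge[OF p_less \<open>0 < T\<close>])
  then show ?thesis using \<open>y 0 = 0\<close> by auto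
qed

lemma generates_semiflow_if_local:
  assumes "\<forall>i<K. generates_local_semiflow (X i)"
  shows "generates_semiflow K X"
  unfolding generates_semiflow_def
proof (intro ballI conjI allI impI)
  fix a assume a: "a \<in> star_space K"
  show "\<exists>\<gamma> T. star_solution K X \<gamma> T \<and> \<gamma> 0 = a"
  proof (cases "a = star_vertex")
    case False
    with a have "fst a < K" "0 < snd a" "snd a < 1"
      using star_space_nonvertex star_space_snd by auto
    with assms show ?thesis
      using star_solution_from_edge_point[of "fst a" K "snd a" X] by simp
  qed (use star_solution_from_vertex in blast)
next
  fix a \<gamma>1 T1 \<gamma>2 T2 t
  assume "star_solution K X \<gamma>1 T1 \<and> star_solution K X \<gamma>2 T2 \<and> \<gamma>1 0 = a \<and> \<gamma>2 0 = a"
    and "t \<in> {0..<min T1 T2}"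
  then show "\<gamma>1 t = \<gamma>2 t" using star_solution_unique[of \<gamma>1 T1 \<gamma>2 T2 t] by simp
qed

end

lemma star_fieldI:
  assumes cont: "\<forall>i<K. continuous_on {0..<1} (X i)"
    and nonsing: "\<forall>i<K. \<forall>x\<in>{0..<1}. X i x \<noteq> 0"
    and p: "p < K" "0 < X p 0" and p_unique: "\<And>i. i < K \<Longrightarrow> 0 < X i 0 \<Longrightarrow> i = p"
  shows "star_field K X p"
proof (rule star_field.intro)
  show "nonsingular_edge_field (X i)" if "i < K" for i
    using cont nonsing that by unfold_locales auto
  show "X i 0 < 0" if "i < K" "i \<noteq> p" for i
  proof -
    have "X i 0 \<noteq> 0" using nonsing that(1) by simp
    moreover have "\<not> 0 < X i 0" using p_unique[of i] that by blast
    ultimately show ?thesis by linarith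
  qed
qed (use p in auto)

theorem mainTheorem9:
  fixes K :: nat and X :: "nat \<Rightarrow> real \<Rightarrow> real"
  assumes cont: "\<forall>i<K. continuous_on {0..<1} (X i)"
    and nonsing: "\<forall>i<K. \<forall>x\<in>{0..<1}. X i x \<noteq> 0"
    and local_sf: "\<forall>i<K. generates_local_semiflow (X i)"
    and same_mag: "\<forall>i<K. \<forall>j<K. \<bar>X i 0\<bar> = \<bar>X j 0\<bar>"
    and one_pos: "\<exists>!i. i < K \<and> 0 < X i 0"
  shows "generates_semiflow K X"
proof -
  obtain p where "p < K" "0 < X p 0" "\<And>i. i < K \<Longrightarrow> 0 < X i 0 \<Longrightarrow> i = p"
    using one_pos by blast
  with cont nonsing have "star_field K X p" by (rule star_fieldI)
  then show ?thesis using local_sf by (rule star_field.generates_semiflow_if_local)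
qed

end
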